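(* For all integers $\lambda\geq 1$ we have $\tilde m_\lambda<1/2<m_\lambda$. Moreover, as $\lambda\to\infty$, \[ m_\lambda = \frac 12 + \frac 1{2\sqrt{\pi\lambda}} + \frac{15}{16\sqrt{\pi}\lambda^{3/2}} + O\bigl(\lambda^{-5/2}\bigr) \] and \[ \tilde m_\lambda = \frac 12 - \frac 1{2\sqrt{\pi\lambda}} + \frac{49}{16\sqrt{\pi}\lambda^{3/2}} + O\bigl(\lambda^{-5/2}\bigr). \]
   Context: $s(n)$ denotes the binary sum of digits of $n\ge0$. For $t\ge0$, $c_t$ (resp. $\tilde c_t$) is the asymptotic density of $\{n\ge0: s(n+t)\ge s(n)\}$ (resp. $\{n\ge 0: s(n+t)>s(n)\}$). For $\lambda\ge0$, $m_\lambda = 2^{-\lambda} \sum_{2^\lambda\leq t<2^{\lambda+1}}c_t$ and $\tilde m_\lambda = 2^{-\lambda} \sum_{2^\lambda\leq t<2^{\lambda+1}}\tilde c_t$. *)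

theory Defs
  imports "HOL-Analysis.Analysis" "HOL-Library.Landau_Symbols"
begin

fun bsum :: "nat \<Rightarrow> nat" where
  "bsum n = (if n = 0 then 0 else n mod 2 + bsum (n div 2))"

declare bsum.simps[simp del]

definition asymp_density :: "nat set \<Rightarrow> real" where
  "asymp_density A = lim (\<lambda>N. real (card {n \<in> A. n < N}) / real N)"

definition c_t :: "nat \<Rightarrow> real" where
  "c_t t = asymp_density {n. bsum (n + t) \<ge> bsum n}"

definition c_tilde :: "nat \<Rightarrow> real" where
  "c_tilde t = asymp_density {n. bsum (n + t) > bsum n}"

definition m_lam :: "nat \<Rightarrow> real" where
  "m_lam l = (\<Sum>t\<in>{2^l..<2^(l+1)}. c_t t) / 2 ^ l"

definition m_tilde :: "nat \<Rightarrow> real" where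
  "m_tilde l = (\<Sum>t\<in>{2^l..<2^(l+1)}. c_tilde t) / 2 ^ l"

end

theory Submission
  imports Defs "HOL-Real_Asymp.Real_Asymp"
begin

text \<open>Write \<open>t = 2^\<lambda> + t'\<close> and \<open>n = 2^\<lambda> q + r\<close> with \<open>t', r < 2^\<lambda>\<close>. Then
  \<open>s(n + t) - s(n) = D + 1 - v\<close>, where \<open>D = s((r + t') mod 2^\<lambda>) - s(r)\<close> only depends on the lower
  block and \<open>v\<close> is the number of trailing ones of \<open>q\<close> (of \<open>q div 2\<close> after a carry), which is
  geometrically distributed independently of \<open>r\<close>. Averaging over \<open>t'\<close> turns \<open>D\<close> into the difference
  of two independent binomial \<open>(\<lambda>, 1/2)\<close> variables, i.e. a centred binomial \<open>(2\<lambda>, 1/2)\<close> variable.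
  This gives \<open>m\<^sub>\<lambda> = 1/2 + p (1/2 + \<lambda>/(2\<lambda> + 2) - X/4)\<close> and \<open>m\<^sub>\<lambda>\<tilde> = 1/2 + p (1/2 - X/2)\<close> with
  \<open>p = C(2\<lambda>, \<lambda>) / 4^\<lambda>\<close> and \<open>X = \<Sum>k\<le>\<lambda>. 2^-k C(2\<lambda>, \<lambda> + k) / C(2\<lambda>, \<lambda>)\<close>, and \<open>1 < X < 2\<close>
  yields the inequalities. For the expansions, Wallis' product gives
  \<open>p = (\<pi> (\<lambda> + 1/4))^-1/2 + O(\<lambda>^-5/2)\<close>, and the ratios \<open>C(2\<lambda>, \<lambda> + k) / C(2\<lambda>, \<lambda>)\<close> lie between
  \<open>1 - k\<^sup>2/\<lambda>\<close> and \<open>1 - k\<^sup>2/\<lambda> + k\<^sup>4/\<lambda>\<^sup>2\<close>, which determines \<open>X\<close> up to \<open>O(\<lambda>^-2)\<close>.\<close>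

section \<open>Binary digit sums\<close>

lemma bsum_mod_div: "bsum n = n mod 2 + bsum (n div 2)"
  by (cases "n = 0") (simp_all add: bsum.simps[of n] bsum.simps[of 0])

lemma bsum_0 [simp]: "bsum 0 = 0"
  by (simp add: bsum.simps)

lemma bsum_pow2_mult_add: "r < 2^L \<Longrightarrow> bsum (2^L * q + r) = bsum q + bsum r"
proof (induction L arbitrary: r)
  case 0
  then show ?case by simp
next
  case (Suc L)
  have "r div 2 < 2^L"
    using Suc.prems by (simp add: less_mult_imp_div_less mult.commute)
  then have "bsum (2^L * q + r div 2) = bsum q + bsum (r div 2)"
    using Suc.IH by blast
  moreover have "(2^Suc L * q + r) div 2 = 2^L * q + r div 2" "(2^Suc L * q + r) mod 2 = r mod 2"
    by (simp_all add: mult.assoc)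
  ultimately show ?case
    using bsum_mod_div[of "2^Suc L * q + r"] bsum_mod_div[of r] by simp
qed

lemma bsum_le_of_less_pow2: "n < 2^L \<Longrightarrow> bsum n \<le> L"
proof (induction L arbitrary: n)
  case 0
  then show ?case by simp
next
  case (Suc L)
  have "n div 2 < 2^L"
    using Suc.prems by (simp add: less_mult_imp_div_less mult.commute)
  then show ?case
    using Suc.IH bsum_mod_div[of n] by fastforce
qed

lemma sum_lessThan_mult:
  fixes f :: "nat \<Rightarrow> 'a::comm_monoid_add"
  shows "(\<Sum>n<a * b. f n) = (\<Sum>q<b. \<Sum>r<a. f (a * q + r))"
proof -
  have "(\<Sum>r<a. f (a * q + r)) = sum f {q * a..<q * a + a}" for q
    using sum.shift_bounds_nat_ivl[of f 0 "q * a" a]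
    by (simp add: atLeast0LessThan add.commute mult.commute)
  then show ?thesis
    by (simp add: sum.nat_group mult.commute)
qed

lemma sum_bsum_binomial:
  fixes f :: "nat \<Rightarrow> real"
  shows "(\<Sum>n<2^L. f (bsum n)) = (\<Sum>i\<le>L. real (L choose i) * f i)"
proof (induction L arbitrary: f)
  case 0
  then show ?case by simp
next
  case (Suc L)
  have top: "(\<Sum>r<2^L. f (bsum (2^L + r))) = (\<Sum>r<2^L. f (bsum r + 1))"
    using bsum_pow2_mult_add[of _ L 1] bsum_mod_div[of 1] by (intro sum.cong) simp_all
  have "(\<Sum>n<2^Suc L. f (bsum n)) = (\<Sum>q<2. \<Sum>r<2^L. f (bsum (2^L * q + r)))"
    using sum_lessThan_mult[of "\<lambda>n. f (bsum n)" "2^L" 2] by (simp add: mult.commute)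
  also have "\<dots> = (\<Sum>r<2^L. f (bsum r)) + (\<Sum>r<2^L. f (bsum r + 1))"
    using top by (simp add: numeral_2_eq_2)
  also have "\<dots> = (\<Sum>i\<le>L. real (L choose i) * f i) + (\<Sum>i\<le>L. real (L choose i) * f (Suc i))"
    using Suc.IH[of f] Suc.IH[of "\<lambda>i. f (Suc i)"] by simp
  also have "\<dots> = (\<Sum>i\<le>Suc L. real (Suc L choose i) * f i)"
  proof -
    have "(\<Sum>i\<le>Suc L. real (Suc L choose i) * f i)
        = f 0 + (\<Sum>i\<le>L. real (L choose i) * f (Suc i)) + (\<Sum>i\<le>L. real (L choose Suc i) * f (Suc i))"
      by (subst sum.atMost_Suc_shift) (simp add: sum.distrib algebra_simps)
    moreover have "(\<Sum>i\<le>Suc L. real (L choose i) * f i) = f 0 + (\<Sum>i\<le>L. real (L choose Suc i) * f (Suc i))"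
      using sum.atMost_Suc_shift[of "\<lambda>i. real (L choose i) * f i" L] by simp
    moreover have "(\<Sum>i\<le>Suc L. real (L choose i) * f i) = (\<Sum>i\<le>L. real (L choose i) * f i)"
      by simp
    ultimately show ?thesis
      by simp
  qed
  finally show ?case .
qed

section \<open>Trailing ones and densities of digit sum increments\<close>

fun trailing_ones :: "nat \<Rightarrow> nat" where
  "trailing_ones q = (if q mod 2 = 1 then Suc (trailing_ones (q div 2)) else 0)"

declare trailing_ones.simps [simp del]

lemma bsum_Suc_add_trailing_ones: "bsum (q + 1) + trailing_ones q = bsum q + 1"
proof (induction q rule: trailing_ones.induct)
  case (1 q)
  show ?case
  proof (cases "q mod 2 = 1")
    case True
    then have "(q + 1) div 2 = q div 2 + 1" "(q + 1) mod 2 = 0"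
      by presburger+
    then show ?thesis
      using 1 True bsum_mod_div[of "q + 1"] bsum_mod_div[of q] by (simp add: trailing_ones.simps)
  next
    case False
    then have "(q + 1) div 2 = q div 2" "(q + 1) mod 2 = 1"
      by presburger+
    then show ?thesis
      using False bsum_mod_div[of "q + 1"] bsum_mod_div[of q] by (simp add: trailing_ones.simps)
  qed
qed

lemma bsum_add_1_diff: "int (bsum (q + 1)) - int (bsum q) = 1 - int (trailing_ones q)"
  using bsum_Suc_add_trailing_ones[of q] by simp

lemma bsum_add_2_diff: "int (bsum (q + 2)) - int (bsum q) = 1 - int (trailing_ones (q div 2))"
proof -
  have "bsum (q + 2) = bsum (q div 2 + 1) + bsum (q mod 2)"
    using bsum_pow2_mult_add[of "q mod 2" 1 "q div 2 + 1"] by simp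
  moreover have "bsum q = bsum (q div 2) + bsum (q mod 2)"
    using bsum_pow2_mult_add[of "q mod 2" 1 "q div 2"] by simp
  ultimately show ?thesis
    using bsum_add_1_diff[of "q div 2"] by simp
qed

lemma le_trailing_ones_iff: "j \<le> trailing_ones q \<longleftrightarrow> q mod 2^j = 2^j - 1"
proof (induction j arbitrary: q)
  case 0
  then show ?case by simp
next
  case (Suc j)
  have split: "q mod 2^Suc j = 2 * ((q div 2) mod 2^j) + q mod 2"
    using mod_mult2_eq[of q 2 "2^j"] by simp
  have digits: "b = 1 \<and> a = x - 1 \<longleftrightarrow> 2 * a + b = 2 * x - 1"
    if "a < x" "b < 2" for a b x :: nat
    using that by arith
  have "q mod 2 = 1 \<and> (q div 2) mod 2^j = 2^j - 1 \<longleftrightarrow> q mod 2^Suc j = 2^Suc j - 1"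
    unfolding split by (subst digits) simp_all
  moreover have "Suc j \<le> trailing_ones q \<longleftrightarrow> q mod 2 = 1 \<and> (q div 2) mod 2^j = 2^j - 1"
    using Suc.IH[of "q div 2"] by (simp add: trailing_ones.simps[of q])
  ultimately show ?case
    by blast
qed

lemma mod_pow2_div2: "K \<ge> 1 \<Longrightarrow> ((q::nat) mod 2^K) div 2 = (q div 2) mod 2^(K - 1)"
  using div_exp_mod_exp_eq[of q 1 "K - 1"] by simp

lemma trailing_ones_mod_pow2_le_iff:
  fixes T :: int
  assumes "T + 1 \<le> int K"
  shows "int (trailing_ones (q mod 2^K)) \<le> T \<longleftrightarrow> int (trailing_ones q) \<le> T"
proof (cases "T \<ge> 0")
  case True
  define j where "j = nat (T + 1)"
  have "j \<le> K"
    using assms True by (simp add: j_def)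
  then have "(q mod 2^K) mod 2^j = q mod 2^j"
    by (simp add: mod_mod_cancel le_imp_power_dvd)
  moreover have "int (trailing_ones x) \<le> T \<longleftrightarrow> \<not> j \<le> trailing_ones x" for x
    using True by (auto simp add: j_def nat_le_iff)
  ultimately show ?thesis
    by (simp add: le_trailing_ones_iff)
qed simp

lemma count_le_trailing_ones:
  assumes "j \<le> K"
  shows "(\<Sum>q<(2::nat)^K. if j \<le> trailing_ones q then 1 else 0::real) = 2^(K - j)"
proof -
  have K: "(2::nat)^K = 2^j * 2^(K - j)"
    using assms by (simp add: power_add[symmetric])
  have "(\<Sum>q<(2::nat)^K. if j \<le> trailing_ones q then 1 else 0::real)
      = (\<Sum>q'<(2::nat)^(K - j). \<Sum>c<(2::nat)^j. if c = 2^j - 1 then 1 else 0::real)"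
    unfolding K sum_lessThan_mult by (intro sum.cong refl) (simp add: le_trailing_ones_iff)
  also have "\<dots> = 2^(K - j)"
    by (simp add: sum.delta)
  finally show ?thesis .
qed

text \<open>The number of trailing ones of a uniformly random integer is geometric with parameter 1/2;
  this is its distribution function.\<close>

definition geom_cdf :: "int \<Rightarrow> real" where
  "geom_cdf x = (if 0 \<le> x then 1 - 1 / 2 ^ nat (x + 1) else 0)"

lemma count_trailing_ones_le:
  fixes T :: int
  assumes "T + 1 \<le> int K"
  shows "(\<Sum>q<(2::nat)^K. if int (trailing_ones q) \<le> T then 1 else 0::real) = 2^K * geom_cdf T"
proof (cases "T \<ge> 0")
  case True
  have j: "nat (T + 1) \<le> K"
    using assms by simp
  have "(\<Sum>q<(2::nat)^K. if int (trailing_ones q) \<le> T then 1 else 0::real)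
      = (\<Sum>q<(2::nat)^K. 1 - (if nat (T + 1) \<le> trailing_ones q then 1 else 0::real))"
    by (intro sum.cong refl) (use True in auto)
  also have "\<dots> = 2^K - 2^(K - nat (T + 1))"
    by (simp add: sum_subtractf count_le_trailing_ones[OF j])
  also have "\<dots> = 2^K * geom_cdf T"
    using j True by (simp add: geom_cdf_def power_diff right_diff_distrib)
  finally show ?thesis .
qed (simp add: geom_cdf_def)

lemma sum_lessThan_pow2_div2:
  fixes f :: "nat \<Rightarrow> 'a::semiring_1"
  assumes "K \<ge> 1"
  shows "(\<Sum>q<(2::nat)^K. f (q div 2)) = 2 * (\<Sum>q<2^(K - 1). f q)"
proof -
  have "(2::nat)^K = 2 * 2^(K - 1)"
    using assms by (simp add: power_eq_if)
  then have "(\<Sum>q<(2::nat)^K. f (q div 2)) = (\<Sum>q<2^(K - 1). \<Sum>r<2. f ((2 * q + r) div 2))"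
    by (simp add: sum_lessThan_mult)
  also have "\<dots> = (\<Sum>q<2^(K - 1). 2 * f q)"
    by (simp add: lessThan_nat_numeral mult_2)
  finally show ?thesis
    by (simp add: sum_distrib_left)
qed

lemma count_trailing_ones_div2_le:
  fixes T :: int
  assumes "T + 2 \<le> int K"
  shows "(\<Sum>q<(2::nat)^K. if int (trailing_ones (q div 2)) \<le> T then 1 else 0::real) = 2^K * geom_cdf T"
proof (cases "T \<ge> 0")
  case True
  then have K: "K \<ge> 1"
    using assms by simp
  have "(\<Sum>q<(2::nat)^K. if int (trailing_ones (q div 2)) \<le> T then 1 else 0::real)
      = 2 * (\<Sum>q<(2::nat)^(K - 1). if int (trailing_ones q) \<le> T then 1 else 0::real)"
    using K by (rule sum_lessThan_pow2_div2)
  also have "\<dots> = 2 * (2^(K - 1) * geom_cdf T)"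
    using assms K by (subst count_trailing_ones_le) simp_all
  also have "\<dots> = 2^K * geom_cdf T"
    using K by (simp add: power_eq_if)
  finally show ?thesis .
qed (simp add: geom_cdf_def)

lemma card_periodic_lessThan:
  assumes per: "\<And>n. n \<in> A \<longleftrightarrow> n + P \<in> A"
  shows "card {n\<in>A. n < k * P + m} = k * card {n\<in>A. n < P} + card {n\<in>A. n < m}"
proof (induction k)
  case (Suc k)
  define N where "N = k * P + m"
  have split: "{n\<in>A. n < N + P} = {n\<in>A. n < P} \<union> (\<lambda>n. n + P) ` {n\<in>A. n < N}"
  proof (intro set_eqI iffI)
    fix x assume x: "x \<in> {n\<in>A. n < N + P}"
    show "x \<in> {n\<in>A. n < P} \<union> (\<lambda>n. n + P) ` {n\<in>A. n < N}"
    proof (cases "x < P")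
      case False
      then have "x - P \<in> A" "x = (x - P) + P"
        using x per[of "x - P"] by simp_all
      then show ?thesis
        using x by (intro UnI2 image_eqI[of _ _ "x - P"]) auto
    qed (use x in auto)
  qed (use per in auto)
  have card: "card ({n\<in>A. n < P} \<union> (\<lambda>n. n + P) ` {n\<in>A. n < N})
      = card {n\<in>A. n < P} + card {n\<in>A. n < N}"
    by (subst card_Un_disjoint) (auto simp: card_image inj_on_def)
  have "card {n\<in>A. n < Suc k * P + m} = card {n\<in>A. n < N + P}"
    by (rule arg_cong[where f = "\<lambda>x. card {n\<in>A. n < x}"]) (simp add: N_def)
  also have "\<dots> = card {n\<in>A. n < P} + card {n\<in>A. n < N}"
    unfolding split card ..
  finally show ?case
    using Suc.IH by (simp add: N_def)
qed simp

lemma asymp_density_periodic: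
  assumes P: "P > 0" and per: "\<And>n. n \<in> A \<longleftrightarrow> n + P \<in> A"
  shows "asymp_density A = real (card {n\<in>A. n < P}) / real P"
proof -
  define f where "f N = card {n\<in>A. n < N}" for N
  define c where "c = f P"
  have periods: "f (k * P + m) = k * c + f m" for k m
    unfolding f_def c_def using per by (rule card_periodic_lessThan)
  have bound: "\<bar>real (f N) / real N - real c / real P\<bar> \<le> real c / real N" if N: "N > 0" for N
  proof -
    have fN: "f N = (N div P) * c + f (N mod P)"
      by (metis periods div_mult_mod_eq)
    have le: "f (N mod P) \<le> c"
      unfolding f_def c_def using P by (intro card_mono) (auto intro: less_trans[OF _ mod_less_divisor])
    have rN: "real N = real (N div P) * real P + real (N mod P)"
      by (metis div_mult_mod_eq of_nat_add of_nat_mult)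
    have "real (f N) - real c * real N / real P = real (f (N mod P)) - real c * real (N mod P) / real P"
      using P by (simp add: fN rN field_simps)
    moreover have "0 \<le> real c * real (N mod P) / real P" "real c * real (N mod P) / real P \<le> real c"
      using P by (simp_all add: divide_le_eq mult_left_mono)
    ultimately have "\<bar>real (f N) - real c * real N / real P\<bar> \<le> real c"
      using le by linarith
    then show ?thesis
      using N by (simp add: field_simps abs_div_pos[symmetric] divide_right_mono)
  qed
  have "\<forall>\<^sub>F N in sequentially. norm (real (f N) / real N - real c / real P) \<le> real c / real N"
    using eventually_gt_at_top[of 0] by eventually_elim (simp add: bound)
  moreover have "(\<lambda>N. real c / real N) \<longlonglongrightarrow> 0"
    by real_asymp
  ultimately have "(\<lambda>N. real (f N) / real N) \<longlonglongrightarrow> real c / real P"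
    by (rule LIM_zero_cancel[OF Lim_null_comparison])
  then show ?thesis
    unfolding asymp_density_def f_def c_def by (rule limI)
qed

lemma asymp_density_digit_block:
  assumes M: "M > 0" and N: "N > 0" and A: "\<And>n. n \<in> A \<longleftrightarrow> P (n mod M) ((n div M) mod N)"
  shows "asymp_density A = (\<Sum>r<M. \<Sum>q<N. if P r q then 1 else 0) / (real M * real N)"
proof -
  have "n \<in> A \<longleftrightarrow> n + M * N \<in> A" for n
    using M unfolding A by simp
  then have "asymp_density A = real (card {n\<in>A. n < M * N}) / real (M * N)"
    using M N by (intro asymp_density_periodic) simp_all
  also have "real (card {n\<in>A. n < M * N}) = (\<Sum>n<M * N. if n \<in> A then 1 else 0)"
    by (simp add: sum.If_cases Int_def conj_commute)
  also have "\<dots> = (\<Sum>q<N. \<Sum>r<M. if P r q then 1 else 0)"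
    unfolding sum_lessThan_mult A by (intro sum.cong refl) simp
  finally show ?thesis
    by (subst sum.swap) simp
qed

definition increment_density :: "int \<Rightarrow> nat \<Rightarrow> real" where
  "increment_density c t = asymp_density {n. c \<le> int (bsum (n + t)) - int (bsum n)}"

lemma c_t_eq_increment_density: "c_t t = increment_density 0 t"
  unfolding c_t_def increment_density_def by simp

lemma c_tilde_eq_increment_density: "c_tilde t = increment_density 1 t"
  unfolding c_tilde_def increment_density_def by (rule arg_cong[where f = asymp_density]) auto

text \<open>Adding \<open>2^l + t\<close> to \<open>2^l q + r\<close> replaces the lower block \<open>r\<close> by \<open>(r + t) mod 2^l\<close> and the
  upper block \<open>q\<close> by \<open>q + 1\<close> or, after a carry, by \<open>q + 2\<close>.\<close>

lemma bsum_increment_pow2_add: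
  assumes r: "r < 2^l" and t: "t < 2^l"
  shows "int (bsum (2^l * q + r + (2^l + t))) - int (bsum (2^l * q + r))
    = int (bsum ((r + t) mod 2^l)) - int (bsum r) + 1
      - int (trailing_ones (if r + t < 2^l then q else q div 2))"
proof (cases "r + t < 2^l")
  case True
  have "2^l * q + r + (2^l + t) = 2^l * (q + 1) + (r + t)"
    by (simp add: algebra_simps)
  then have "bsum (2^l * q + r + (2^l + t)) = bsum (q + 1) + bsum (r + t)"
    using bsum_pow2_mult_add[OF True] by presburger
  then show ?thesis
    using True r bsum_add_1_diff[of q] by (simp add: bsum_pow2_mult_add)
next
  case False
  define y where "y = r + t - 2^l"
  have y: "y < 2^l" "(r + t) mod 2^l = y"
    using r t False by (simp_all add: y_def le_mod_geq)
  have "2^l * q + r + (2^l + t) = 2^l * (q + 2) + y"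
    using False by (simp add: y_def algebra_simps)
  then have "bsum (2^l * q + r + (2^l + t)) = bsum (q + 2) + bsum y"
    using bsum_pow2_mult_add[OF y(1)] by presburger
  then show ?thesis
    using False r y bsum_add_2_diff[of q] by (simp add: bsum_pow2_mult_add)
qed

lemma increment_density_pow2_add:
  assumes t: "t < 2^l" and c: "0 \<le> c"
  shows "increment_density c (2^l + t)
    = (\<Sum>r<2^l. geom_cdf (int (bsum ((r + t) mod 2^l)) - int (bsum r) + 1 - c)) / 2^l"
proof -
  define K where "K = l + 3"
  define T where "T r = int (bsum ((r + t) mod 2^l)) - int (bsum r) + 1 - c" for r
  define w where "w r q = trailing_ones (if r + t < 2^l then q else q div 2)" for r q
  have T: "T r + 2 \<le> int K" for r
    using bsum_le_of_less_pow2[of "(r + t) mod 2^l" l] c by (simp add: T_def K_def)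
  \<comment> \<open>As \<open>T r + 2 \<le> K\<close>, the condition only sees \<open>q mod 2^K\<close>, so the set has period \<open>2^l * 2^K\<close>.\<close>
  have w_mod: "int (w r (q mod 2^K)) \<le> T r \<longleftrightarrow> int (w r q) \<le> T r" for r q
    using T[of r] trailing_ones_mod_pow2_le_iff[of "T r" K q]
      trailing_ones_mod_pow2_le_iff[of "T r" "K - 1" "q div 2"] mod_pow2_div2[of K q]
    by (simp add: w_def K_def)
  have "int (bsum (n + (2^l + t))) - int (bsum n) = T (n mod 2^l) + c - int (w (n mod 2^l) (n div 2^l))"
    for n
    using bsum_increment_pow2_add[of "n mod 2^l" l t "n div 2^l"] t by (simp add: T_def w_def)
  then have "n \<in> {n. c \<le> int (bsum (n + (2^l + t))) - int (bsum n)}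
      \<longleftrightarrow> int (w (n mod 2^l) ((n div 2^l) mod 2^K)) \<le> T (n mod 2^l)" for n
    by (simp add: w_mod)
  then have "increment_density c (2^l + t)
      = (\<Sum>r<2^l. \<Sum>q<2^K. if int (w r q) \<le> T r then 1 else 0) / (real (2^l) * real (2^K))"
    unfolding increment_density_def by (intro asymp_density_digit_block) simp_all
  moreover have "(\<Sum>q<(2::nat)^K. if int (w r q) \<le> T r then 1 else 0::real) = 2^K * geom_cdf (T r)" for r
    using T[of r] count_trailing_ones_le[of "T r" K] count_trailing_ones_div2_le[of "T r" K]
    by (cases "r + t < 2^l") (simp_all add: w_def)
  ultimately show ?thesis
    by (simp add: T_def sum_distrib_left[symmetric])
qed

lemma sum_lessThan_rotate:
  fixes g :: "nat \<Rightarrow> 'a::comm_monoid_add"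
  assumes r: "r < M"
  shows "(\<Sum>t<M. g ((r + t) mod M)) = (\<Sum>y<M. g y)"
proof (rule sum.reindex_bij_witness[where i = "\<lambda>y. (y + M - r) mod M" and j = "\<lambda>t. (r + t) mod M"])
  fix a assume a: "a \<in> {..<M}"
  have "((r + a) mod M + M - r) mod M = ((r + a) mod M + (M - r)) mod M"
    using r by simp
  also have "\<dots> = (r + a + (M - r)) mod M"
    by (simp add: mod_add_left_eq)
  also have "r + a + (M - r) = a + M"
    using r by simp
  finally show "((r + a) mod M + M - r) mod M = a"
    using a by simp
next
  fix a assume a: "a \<in> {..<M}"
  have "(r + (a + M - r) mod M) mod M = (r + (a + M - r)) mod M"
    by (simp add: mod_add_right_eq)
  also have "r + (a + M - r) = a + M"
    using r by simp
  finally show "(r + (a + M - r) mod M) mod M = a"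
    using a by simp
qed (use r in auto)

lemma sum_binomial_reflect:
  fixes G :: "nat \<Rightarrow> real"
  shows "(\<Sum>i\<le>l. real (l choose i) * G i) = (\<Sum>i\<le>l. real (l choose i) * G (l - i))"
proof -
  have "(\<Sum>i\<le>l. real (l choose i) * G i) = (\<Sum>i\<le>l. real (l choose (l - i)) * G (l - i))"
    using sum.atLeastAtMost_rev[of "\<lambda>i. real (l choose i) * G i" 0 l] by (simp add: atLeast0AtMost)
  also have "\<dots> = (\<Sum>i\<le>l. real (l choose i) * G (l - i))"
    by (intro sum.cong refl) (simp add: binomial_symmetric[symmetric])
  finally show ?thesis .
qed

lemma sum_bsum_pair_binomial:
  fixes G :: "nat \<Rightarrow> real"
  shows "(\<Sum>r<(2::nat)^l. \<Sum>y<(2::nat)^l. G (bsum y + bsum r)) = (\<Sum>i\<le>2*l. real ((2*l) choose i) * G i)"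
proof -
  have "(\<Sum>r<(2::nat)^l. \<Sum>y<(2::nat)^l. G (bsum y + bsum r))
      = (\<Sum>y<(2::nat)^l. \<Sum>r<(2::nat)^l. G (bsum (2^l * y + r)))"
    by (subst sum.swap) (simp add: bsum_pow2_mult_add)
  also have "\<dots> = (\<Sum>z<(2::nat)^(2*l). G (bsum z))"
    by (simp only: mult_2 power_add sum_lessThan_mult)
  finally show ?thesis
    by (simp add: sum_bsum_binomial)
qed

text \<open>Reflecting one binomial distribution turns the difference of two digit sums into a sum,
  which is the digit sum of the concatenated \<open>2 l\<close>-digit number.\<close>

lemma sum_bsum_diff_binomial:
  fixes F :: "int \<Rightarrow> real"
  shows "(\<Sum>r<(2::nat)^l. \<Sum>y<(2::nat)^l. F (int (bsum y) - int (bsum r)))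
       = (\<Sum>i\<le>2*l. real ((2*l) choose i) * F (int i - int l))"
proof -
  have reflect: "(\<Sum>r<(2::nat)^l. F (int j - int (bsum r))) = (\<Sum>r<(2::nat)^l. F (int j + int (bsum r) - int l))"
    for j
  proof -
    have "(\<Sum>r<(2::nat)^l. F (int j - int (bsum r))) = (\<Sum>i\<le>l. real (l choose i) * F (int j - int i))"
      by (rule sum_bsum_binomial)
    also have "\<dots> = (\<Sum>i\<le>l. real (l choose i) * F (int j - int (l - i)))"
      by (rule sum_binomial_reflect)
    also have "\<dots> = (\<Sum>i\<le>l. real (l choose i) * F (int j + int i - int l))"
      by (intro sum.cong refl) (simp add: of_nat_diff algebra_simps)
    finally show ?thesis
      using sum_bsum_binomial[of "\<lambda>i. F (int j + int i - int l)" l] by simp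
  qed
  have "(\<Sum>r<(2::nat)^l. \<Sum>y<(2::nat)^l. F (int (bsum y) - int (bsum r)))
      = (\<Sum>r<(2::nat)^l. \<Sum>j\<le>l. real (l choose j) * F (int j - int (bsum r)))"
    by (rule sum.cong[OF refl], rule sum_bsum_binomial[of "\<lambda>j. F (int j - int (bsum _))"])
  also have "\<dots> = (\<Sum>j\<le>l. real (l choose j) * (\<Sum>r<(2::nat)^l. F (int j - int (bsum r))))"
    unfolding sum_distrib_left by (rule sum.swap)
  also have "\<dots> = (\<Sum>j\<le>l. real (l choose j) * (\<Sum>r<(2::nat)^l. F (int j + int (bsum r) - int l)))"
    by (simp only: reflect)
  also have "\<dots> = (\<Sum>r<(2::nat)^l. \<Sum>j\<le>l. real (l choose j) * F (int j + int (bsum r) - int l))"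
    unfolding sum_distrib_left by (rule sum.swap)
  also have "\<dots> = (\<Sum>r<(2::nat)^l. \<Sum>y<(2::nat)^l. F (int (bsum y + bsum r) - int l))"
    by (rule sum.cong[OF refl], subst sum_bsum_binomial) simp
  also have "\<dots> = (\<Sum>i\<le>2*l. real ((2*l) choose i) * F (int i - int l))"
    by (rule sum_bsum_pair_binomial)
  finally show ?thesis .
qed

lemma sum_increment_density_block:
  assumes c: "0 \<le> c"
  shows "(\<Sum>t\<in>{2^l..<2^(l+1)}. increment_density c t) / 2^l
    = (\<Sum>i\<le>2*l. real ((2*l) choose i) * geom_cdf (int i - int l + 1 - c)) / 4^l"
proof -
  define F where "F x = geom_cdf (x + 1 - c)" for x
  have "(\<Sum>t\<in>{2^l..<2^(l+1)}. increment_density c t) = (\<Sum>t<(2::nat)^l. increment_density c (2^l + t))"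
    using sum.shift_bounds_nat_ivl[of "increment_density c" 0 "2^l" "2^l"]
    by (simp add: atLeast0LessThan add.commute mult_2)
  also have "\<dots> = (\<Sum>t<(2::nat)^l. (\<Sum>r<(2::nat)^l. F (int (bsum ((r + t) mod 2^l)) - int (bsum r))) / 2^l)"
    by (rule sum.cong[OF refl], subst increment_density_pow2_add) (simp_all add: c F_def algebra_simps)
  also have "\<dots> = (\<Sum>t<(2::nat)^l. \<Sum>r<(2::nat)^l. F (int (bsum ((r + t) mod 2^l)) - int (bsum r))) / 2^l"
    by (simp add: sum_divide_distrib)
  also have "\<dots> = (\<Sum>r<(2::nat)^l. \<Sum>y<(2::nat)^l. F (int (bsum y) - int (bsum r))) / 2^l"
    by (subst sum.swap) (simp add: sum_lessThan_rotate[of _ "2^l" "\<lambda>y. F (int (bsum y) - int (bsum _))"])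
  also have "\<dots> = (\<Sum>i\<le>2*l. real ((2*l) choose i) * F (int i - int l)) / 2^l"
    by (simp only: sum_bsum_diff_binomial)
  moreover have "(4::real)^l = 2^l * 2^l"
    using power_mult_distrib[of "2::real" 2 l] by simp
  ultimately show ?thesis
    by (simp add: F_def divide_divide_eq_left)
qed

lemma m_lam_eq_binomial_sum:
  "m_lam l = (\<Sum>i\<le>2*l. real ((2*l) choose i) * geom_cdf (int i - int l + 1)) / 4^l"
  unfolding m_lam_def c_t_eq_increment_density sum_increment_density_block[OF order_refl]
  by (simp only: diff_zero)

lemma m_tilde_eq_binomial_sum:
  "m_tilde l = (\<Sum>i\<le>2*l. real ((2*l) choose i) * geom_cdf (int i - int l)) / 4^l"
  unfolding m_tilde_def c_tilde_eq_increment_density sum_increment_density_block[OF zero_le_one]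
  by (intro arg_cong[where f = "\<lambda>x. x / 4^l"] sum.cong) simp_all

section \<open>Closed forms and the inequalities\<close>

definition central_binom_prob :: "nat \<Rightarrow> real" where
  "central_binom_prob l = real ((2*l) choose l) / 4^l"

definition binom_ratio :: "nat \<Rightarrow> nat \<Rightarrow> real" where
  "binom_ratio l k = real ((2*l) choose (l + k)) / real ((2*l) choose l)"

definition ratio_sum :: "nat \<Rightarrow> real" where
  "ratio_sum l = (\<Sum>k\<le>l. binom_ratio l k / 2^k)"

lemma binomial_Suc_mult: "(n choose Suc k) * Suc k = (n - k) * (n choose k)"
proof (cases n)
  case (Suc m)
  have "Suc m * (m choose k) = (Suc m choose Suc k) * Suc k"
    by (rule Suc_times_binomial_eq)
  moreover have "(Suc m - k) * (Suc m choose k) = Suc m * (m choose k)"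
    using binomial_absorb_comp[of "Suc m" k] by simp
  ultimately show ?thesis
    using Suc by simp
qed simp

lemma sum_atMost_double:
  fixes g :: "nat \<Rightarrow> 'a::comm_monoid_add"
  shows "(\<Sum>i\<le>2*l. g i) = (\<Sum>i<l. g i) + (\<Sum>k\<le>l. g (l + k))"
proof -
  have "{..2*l} = {..<l} \<union> {l..2*l}"
    by auto
  then have "(\<Sum>i\<le>2*l. g i) = (\<Sum>i<l. g i) + (\<Sum>i\<in>{l..2*l}. g i)"
    by (simp only:) (rule sum.union_disjoint, auto)
  also have "(\<Sum>i\<in>{l..2*l}. g i) = (\<Sum>k\<le>l. g (l + k))"
    using sum.shift_bounds_cl_nat_ivl[of g 0 l l] by (simp add: atLeast0AtMost add.commute mult_2)
  finally show ?thesis .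
qed

lemma sum_upper_half_binomial: "(\<Sum>k\<le>l. real ((2*l) choose (l + k))) = (4^l + real ((2*l) choose l)) / 2"
proof -
  have lower: "(\<Sum>i<l. real ((2*l) choose i)) = (\<Sum>i<l. real ((2*l) choose (l + Suc i)))"
  proof -
    have "(\<Sum>i<l. real ((2*l) choose i)) = (\<Sum>i<l. real ((2*l) choose (l - Suc i)))"
      using sum.atLeastLessThan_rev[of "\<lambda>i. real ((2*l) choose i)" 0 l] by (simp add: atLeast0LessThan)
    also have "\<dots> = (\<Sum>i<l. real ((2*l) choose (l + Suc i)))"
    proof (intro sum.cong refl)
      fix i assume "i \<in> {..<l}"
      then have "2*l - (l - Suc i) = l + Suc i"
        by simp
      then show "real ((2*l) choose (l - Suc i)) = real ((2*l) choose (l + Suc i))"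
        using binomial_symmetric[of "l - Suc i" "2*l"] by simp
    qed
    finally show ?thesis .
  qed
  have upper: "(\<Sum>k\<le>l. real ((2*l) choose (l + k)))
      = real ((2*l) choose l) + (\<Sum>i<l. real ((2*l) choose (l + Suc i)))"
    by (simp only: lessThan_Suc_atMost[symmetric] sum.lessThan_Suc_shift) simp
  have "(\<Sum>i\<le>2*l. real ((2*l) choose i)) = 4^l"
    using choose_row_sum[of "2*l"] by (simp flip: of_nat_sum add: power_mult)
  then show ?thesis
    using sum_atMost_double[of "\<lambda>i. real ((2*l) choose i)" l] lower upper by simp
qed

lemma sum_upper_half_binomial_geom_cdf:
  "(\<Sum>k\<le>l. real ((2*l) choose (l + k)) * geom_cdf (int k + int j))
    = (4^l + real ((2*l) choose l)) / 2 - real ((2*l) choose l) * ratio_sum l / 2^(j + 1)"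
proof -
  have geom: "geom_cdf (int k + int j) = 1 - 1 / 2^k / 2^(j + 1)" for k
    by (simp add: geom_cdf_def nat_add_distrib power_add)
  have "(\<Sum>k\<le>l. real ((2*l) choose (l + k)) * geom_cdf (int k + int j))
      = (\<Sum>k\<le>l. real ((2*l) choose (l + k))) - (\<Sum>k\<le>l. real ((2*l) choose (l + k)) / 2^k) / 2^(j + 1)"
    unfolding geom by (simp add: right_diff_distrib sum_subtractf sum_divide_distrib)
  also have "(\<Sum>k\<le>l. real ((2*l) choose (l + k)) / 2^k) = real ((2*l) choose l) * ratio_sum l"
    by (simp add: ratio_sum_def binom_ratio_def sum_distrib_left)
  finally show ?thesis
    by (simp add: sum_upper_half_binomial)
qed

lemma binomial_pred_central:
  assumes "l \<ge> 1"
  shows "real ((2*l) choose (l - 1)) = real ((2*l) choose l) * l / (l + 1)"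
proof -
  have "((2*l) choose Suc (l - 1)) * Suc (l - 1) = (2*l - (l - 1)) * ((2*l) choose (l - 1))"
    by (rule binomial_Suc_mult)
  then have "((2*l) choose l) * l = (l + 1) * ((2*l) choose (l - 1))"
    using assms by (simp add: Suc_diff_le)
  then have "real ((2*l) choose l) * real l = real (l + 1) * real ((2*l) choose (l - 1))"
    by (metis of_nat_mult)
  then show ?thesis
    by (simp add: field_simps)
qed

lemma m_lam_closed_form:
  assumes l: "l \<ge> 1"
  shows "m_lam l = 1/2 + central_binom_prob l * (1/2 + l / (2 * (l + 1)) - ratio_sum l / 4)"
proof -
  define C where "C = real ((2*l) choose l)"
  \<comment> \<open>only \<open>i = l - 1\<close> contributes, with \<open>geom_cdf 0 = 1/2\<close>\<close>
  have lower: "(\<Sum>i<l. real ((2*l) choose i) * geom_cdf (int i - int l + 1)) = C * l / (l + 1) / 2"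
  proof -
    obtain m where m: "l = Suc m"
      using l by (cases l) auto
    have "(\<Sum>i<m. real ((2*l) choose i) * geom_cdf (int i - int l + 1)) = 0"
      by (intro sum.neutral ballI) (simp add: geom_cdf_def m)
    then show ?thesis
      using binomial_pred_central[OF l] by (simp add: m C_def geom_cdf_def)
  qed
  have upper: "(\<Sum>k\<le>l. real ((2*l) choose (l + k)) * geom_cdf (int (l + k) - int l + 1))
      = (4^l + C) / 2 - C * ratio_sum l / 4"
    using sum_upper_half_binomial_geom_cdf[of l 1] by (simp add: C_def add.commute)
  have "m_lam l = (C * l / (l + 1) / 2 + ((4^l + C) / 2 - C * ratio_sum l / 4)) / 4^l"
    unfolding m_lam_eq_binomial_sum sum_atMost_double lower upper ..
  also have "\<dots> = 1/2 + C / 4^l * (1/2 + l / (2 * (l + 1)) - ratio_sum l / 4)"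
  proof -
    have "(4::real)^l * (16 * real l + 16) \<noteq> 0"
      by (simp add: add_pos_nonneg)
    then show ?thesis
      by (simp add: field_simps)
  qed
  finally show ?thesis
    by (simp add: central_binom_prob_def C_def)
qed

lemma m_tilde_closed_form: "m_tilde l = 1/2 + central_binom_prob l * (1/2 - ratio_sum l / 2)"
proof -
  define C where "C = real ((2*l) choose l)"
  have lower: "(\<Sum>i<l. real ((2*l) choose i) * geom_cdf (int i - int l)) = 0"
    by (intro sum.neutral ballI) (simp add: geom_cdf_def)
  have upper: "(\<Sum>k\<le>l. real ((2*l) choose (l + k)) * geom_cdf (int (l + k) - int l))
      = (4^l + C) / 2 - C * ratio_sum l / 2"
    using sum_upper_half_binomial_geom_cdf[of l 0] by (simp add: C_def)
  have "m_tilde l = ((4^l + C) / 2 - C * ratio_sum l / 2) / 4^l"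
    unfolding m_tilde_eq_binomial_sum sum_atMost_double lower upper by simp
  then show ?thesis
    by (simp add: central_binom_prob_def C_def field_simps)
qed

lemma central_binom_prob_pos: "central_binom_prob l > 0"
  by (simp add: central_binom_prob_def)

lemma binom_ratio_0 [simp]: "binom_ratio l 0 = 1"
  by (simp add: binom_ratio_def)

lemma binom_ratio_nonneg: "binom_ratio l k \<ge> 0"
  by (simp add: binom_ratio_def)

lemma binom_ratio_le_1: "binom_ratio l k \<le> 1"
proof -
  have "(2*l) choose (l + k) \<le> (2*l) choose ((2*l) div 2)"
    by (rule binomial_maximum)
  then show ?thesis
    by (simp add: binom_ratio_def divide_le_eq)
qed

lemma binom_ratio_eq_0: "k > l \<Longrightarrow> binom_ratio l k = 0"
  by (simp add: binom_ratio_def)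

lemma binom_ratio_Suc:
  assumes "k \<le> l"
  shows "binom_ratio l (Suc k) = binom_ratio l k * ((real l - real k) / (real l + real k + 1))"
proof -
  have "((2*l) choose Suc (l + k)) * Suc (l + k) = (l - k) * ((2*l) choose (l + k))"
    using binomial_Suc_mult[of "2*l" "l + k"] by simp
  then have "real ((2*l) choose Suc (l + k)) * real (Suc (l + k)) = real (l - k) * real ((2*l) choose (l + k))"
    by (metis of_nat_mult)
  then have "real ((2*l) choose (l + Suc k)) = real ((2*l) choose (l + k)) * ((real l - real k) / (real l + real k + 1))"
    using assms by (simp add: of_nat_diff field_simps)
  then show ?thesis
    by (simp add: binom_ratio_def)
qed

lemma sum_inverse_pow2: "(\<Sum>k\<le>n. 1 / 2^k :: real) = 2 - 1 / 2^n"
  by (induction n) (simp_all add: field_simps)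

lemma ratio_sum_nonneg: "ratio_sum l \<ge> 0"
  unfolding ratio_sum_def by (intro sum_nonneg divide_nonneg_pos binom_ratio_nonneg) simp_all

lemma ratio_sum_less_2: "ratio_sum l < 2"
proof -
  have "ratio_sum l \<le> (\<Sum>k\<le>l. 1 / 2^k)"
    unfolding ratio_sum_def by (intro sum_mono divide_right_mono binom_ratio_le_1) simp
  also have "\<dots> < 2"
    by (simp add: sum_inverse_pow2)
  finally show ?thesis .
qed

lemma ratio_sum_gt_1:
  assumes "l \<ge> 1"
  shows "ratio_sum l > 1"
proof -
  have "binom_ratio l 1 > 0"
    using assms by (simp add: binom_ratio_def)
  moreover have "(\<Sum>k\<in>{0, 1}. binom_ratio l k / 2^k) \<le> ratio_sum l"
    unfolding ratio_sum_def
    by (rule sum_mono2) (use assms in \<open>auto intro: divide_nonneg_pos binom_ratio_nonneg\<close>)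
  ultimately show ?thesis
    by simp
qed

lemma m_tilde_less_half: "l \<ge> 1 \<Longrightarrow> m_tilde l < 1/2"
  using ratio_sum_gt_1 central_binom_prob_pos[of l] by (simp add: m_tilde_closed_form mult_pos_neg)

lemma half_less_m_lam:
  assumes "l \<ge> 1"
  shows "1/2 < m_lam l"
proof -
  have "0 \<le> real l / (2 * (real l + 1))"
    by simp
  then have "0 < 1/2 + real l / (2 * (real l + 1)) - ratio_sum l / 4"
    using ratio_sum_less_2[of l] by linarith
  then show ?thesis
    using central_binom_prob_pos[of l] by (simp add: m_lam_closed_form[OF assms])
qed

section \<open>Asymptotics of the ratio sum\<close>

lemma binom_ratio_lower_step:
  fixes x y :: real
  assumes x: "x \<ge> 1" and y: "y \<ge> 0"
  shows "(x - (y + 1)^2) / x \<le> ((x - y^2) / x) * ((x - y) / (x + y + 1))"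
proof -
  have d: "x + y + 1 > 0"
    using x y by simp
  have "(x - y^2) * (x - y) - (x - (y + 1)^2) * (x + y + 1) = 2 * y^3 + 3 * y^2 + 3 * y + 1"
    by algebra
  then have "(x - (y + 1)^2) * (x + y + 1) \<le> (x - y^2) * (x - y)"
    using y by (smt (verit) zero_le_power mult_nonneg_nonneg)
  then have "((x - (y + 1)^2) * (x + y + 1)) / (x * (x + y + 1)) \<le> ((x - y^2) * (x - y)) / (x * (x + y + 1))"
    using x d by (intro divide_right_mono) simp_all
  then show ?thesis
    using d by simp
qed

lemma binom_ratio_upper_step:
  fixes x y :: real
  assumes x: "x \<ge> 1" and y: "y \<ge> 0"
  shows "((x^2 - y^2 * x + y^4) / x^2) * ((x - y) / (x + y + 1)) \<le> (x^2 - (y + 1)^2 * x + (y + 1)^4) / x^2"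
proof -
  have d: "x + y + 1 > 0"
    using x y by simp
  have "(x^2 - (y + 1)^2 * x + (y + 1)^4) * (x + y + 1) - (x^2 - y^2 * x + y^4) * (x - y)
      = x * (2 * y^3 + 3 * y^2 + y) + (y + 1)^5 + y^5"
    by algebra
  moreover have "0 \<le> x * (2 * y^3 + 3 * y^2 + y) + (y + 1)^5 + y^5"
    using x y by simp
  ultimately have "(x^2 - y^2 * x + y^4) * (x - y) \<le> (x^2 - (y + 1)^2 * x + (y + 1)^4) * (x + y + 1)"
    by linarith
  then have "((x^2 - y^2 * x + y^4) * (x - y)) / (x^2 * (x + y + 1))
      \<le> ((x^2 - (y + 1)^2 * x + (y + 1)^4) * (x + y + 1)) / (x^2 * (x + y + 1))"
    using x d by (intro divide_right_mono) simp_all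
  then show ?thesis
    using d by simp
qed

lemma binom_ratio_ge:
  assumes l: "l \<ge> 1"
  shows "binom_ratio l k \<ge> 1 - real k ^ 2 / real l"
proof (induction k)
  case (Suc k)
  define x where "x = real l"
  define y where "y = real k"
  have x: "x \<ge> 1" and y: "y \<ge> 0"
    using l by (simp_all add: x_def y_def)
  have Suc_k: "real (Suc k) = y + 1"
    by (simp add: y_def)
  show ?case
  proof (cases "k < l")
    case False
    then have "real l \<le> real (Suc k)"
      by simp
    also have "\<dots> \<le> real (Suc k) ^ 2"
      using mult_right_mono[of 1 "real (Suc k)" "real (Suc k)"] by (simp add: power2_eq_square)
    finally have "1 - real (Suc k) ^ 2 / real l \<le> 0"
      using l by simp
    then show ?thesis
      using binom_ratio_nonneg[of l "Suc k"] by linarith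
  next
    case True
    have r: "0 \<le> (x - y) / (x + y + 1)"
      using True y by (simp add: x_def y_def)
    have "(x - (y + 1)^2) / x \<le> ((x - y^2) / x) * ((x - y) / (x + y + 1))"
      using x y by (rule binom_ratio_lower_step)
    also have "\<dots> \<le> binom_ratio l (Suc k)"
      using True mult_right_mono[OF Suc.IH r] x
      by (simp add: binom_ratio_Suc x_def y_def diff_divide_distrib)
    finally show ?thesis
      using x unfolding Suc_k x_def[symmetric] by (simp add: diff_divide_distrib)
  qed
qed simp

lemma binom_ratio_le:
  assumes l: "l \<ge> 1"
  shows "binom_ratio l k \<le> 1 - real k ^ 2 / real l + real k ^ 4 / real l ^ 2"
proof (induction k)
  case (Suc k)
  define x where "x = real l"
  define y where "y = real k"
  have x: "x \<ge> 1" and y: "y \<ge> 0"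
    using l by (simp_all add: x_def y_def)
  have Suc_k: "real (Suc k) = y + 1"
    by (simp add: y_def)
  have rhs: "1 - z / x + z^2 / x^2 = (x^2 - z * x + z^2) / x^2" for z
    using x by (simp add: field_simps power2_eq_square)
  show ?case
  proof (cases "k < l")
    case False
    define z where "z = (y + 1)^2"
    have "0 < (x - z / 2)^2 + 3/4 * z^2"
      using y by (simp add: z_def add_nonneg_pos)
    also have "(x - z / 2)^2 + 3/4 * z^2 = x^2 - z * x + z^2"
      by (simp add: power2_eq_square algebra_simps)
    finally have "0 \<le> 1 - z / x + z^2 / x^2"
      using x rhs[of z] by simp
    then show ?thesis
      using False unfolding Suc_k x_def[symmetric] by (simp add: binom_ratio_eq_0 z_def flip: power_mult)
  next
    case True
    have r: "0 \<le> (x - y) / (x + y + 1)"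
      using True y by (simp add: x_def y_def)
    have "binom_ratio l (Suc k) \<le> ((x^2 - y^2 * x + y^4) / x^2) * ((x - y) / (x + y + 1))"
      using True mult_right_mono[OF Suc.IH r] rhs[of "y^2"]
      by (simp add: binom_ratio_Suc x_def y_def flip: power_mult)
    also have "\<dots> \<le> (x^2 - (y + 1)^2 * x + (y + 1)^4) / x^2"
      using x y by (rule binom_ratio_upper_step)
    finally show ?thesis
      using rhs[of "(y + 1)^2"] unfolding Suc_k x_def[symmetric] by (simp flip: power_mult)
  qed
qed simp

lemma sum_atMost_div_pow2_telescope:
  fixes P f :: "nat \<Rightarrow> real"
  assumes step: "\<And>n. P (Suc n) = 2 * P n - f (Suc n)" and base: "f 0 = c - P 0"
  shows "(\<Sum>k\<le>n. f k / 2^k) = c - P n / 2^n"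
proof (induction n)
  case (Suc n)
  have "P n / 2^n = 2 * P n / 2^Suc n"
    by simp
  then show ?case
    using Suc.IH by (simp add: step diff_divide_distrib)
qed (simp add: base)

lemma sum_square_div_pow2: "(\<Sum>k\<le>n. real k ^ 2 / 2^k) = 6 - (real n ^ 2 + 4 * real n + 6) / 2^n"
  by (rule sum_atMost_div_pow2_telescope) (simp_all add: power2_eq_square algebra_simps)

lemma sum_pow4_div_pow2:
  "(\<Sum>k\<le>n. real k ^ 4 / 2^k)
    = 150 - (real n ^ 4 + 8 * real n ^ 3 + 36 * real n ^ 2 + 104 * real n + 150) / 2^n"
  by (rule sum_atMost_div_pow2_telescope) (simp_all add: algebra_simps power_numeral_reduce)

text \<open>The closed form of \<open>\<Sum>k\<le>l. (1 - k\<^sup>2 / l) / 2^k\<close>, i.e. of \<open>ratio_sum\<close> with each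
  \<open>binom_ratio l k\<close> replaced by its second order approximation.\<close>

definition ratio_sum_approx :: "nat \<Rightarrow> real" where
  "ratio_sum_approx l = 2 - 1 / 2^l - (6 - (real l ^ 2 + 4 * real l + 6) / 2^l) / real l"

lemma ratio_sum_approx_error:
  assumes l: "l \<ge> 1"
  shows "\<bar>ratio_sum l - ratio_sum_approx l\<bar> \<le> 150 / real l ^ 2"
proof -
  have "ratio_sum_approx l = (\<Sum>k\<le>l. 1 / 2^k) - (\<Sum>k\<le>l. real k ^ 2 / 2^k) / real l"
    by (simp add: ratio_sum_approx_def sum_inverse_pow2 sum_square_div_pow2)
  also have "\<dots> = (\<Sum>k\<le>l. (1 - real k ^ 2 / real l) / 2^k)"
    by (simp add: sum_subtractf sum_divide_distrib diff_divide_distrib mult.commute)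
  finally have "ratio_sum l - ratio_sum_approx l = (\<Sum>k\<le>l. (binom_ratio l k - (1 - real k ^ 2 / real l)) / 2^k)"
    by (simp add: ratio_sum_def sum_subtractf diff_divide_distrib)
  then have "\<bar>ratio_sum l - ratio_sum_approx l\<bar> \<le> (\<Sum>k\<le>l. \<bar>binom_ratio l k - (1 - real k ^ 2 / real l)\<bar> / 2^k)"
    by (simp add: sum_abs[THEN order_trans] abs_divide)
  also have "\<dots> \<le> (\<Sum>k\<le>l. (real k ^ 4 / real l ^ 2) / 2^k)"
  proof (intro sum_mono divide_right_mono)
    fix k
    show "\<bar>binom_ratio l k - (1 - real k ^ 2 / real l)\<bar> \<le> real k ^ 4 / real l ^ 2"
      using binom_ratio_ge[OF l, of k] binom_ratio_le[OF l, of k] by simp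
  qed simp
  also have "\<dots> = (\<Sum>k\<le>l. real k ^ 4 / 2^k) / real l ^ 2"
    by (simp add: sum_divide_distrib mult.commute)
  also have "\<dots> \<le> 150 / real l ^ 2"
    by (intro divide_right_mono) (simp_all add: sum_pow4_div_pow2)
  finally show ?thesis .
qed

lemma ratio_sum_asymp: "(\<lambda>l. ratio_sum l - ratio_sum_approx l) \<in> O(\<lambda>l. 1 / real l ^ 2)"
proof (rule bigoI[where c = 150])
  show "\<forall>\<^sub>F l in sequentially. norm (ratio_sum l - ratio_sum_approx l) \<le> 150 * norm (1 / real l ^ 2)"
    using eventually_ge_at_top[of 1] by eventually_elim (simp add: ratio_sum_approx_error)
qed

section \<open>Asymptotics of the central binomial coefficient\<close>

lemma central_binom_prob_0 [simp]: "central_binom_prob 0 = 1"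
  by (simp add: central_binom_prob_def)

lemma central_binom_prob_Suc:
  "central_binom_prob (Suc n) = central_binom_prob n * (2 * real n + 1) / (2 * real n + 2)"
proof -
  define A where "A = real (Suc (Suc (2*n)) choose Suc n)"
  define B where "B = real (Suc (2*n) choose n)"
  define C where "C = real ((2*n) choose n)"
  have "Suc (Suc (2*n)) * (Suc (2*n) choose n) = (Suc (Suc (2*n)) choose Suc n) * Suc n"
    by (rule Suc_times_binomial_eq)
  then have a: "real (Suc (Suc (2*n))) * B = A * real (Suc n)"
    unfolding A_def B_def of_nat_mult[symmetric] by (rule arg_cong)
  have "(Suc (2*n) choose Suc n) = (Suc (2*n) choose n)"
    using binomial_symmetric[of n "Suc (2*n)"] by (simp add: Suc_diff_le)
  moreover have "Suc (2*n) * ((2*n) choose n) = (Suc (2*n) choose Suc n) * Suc n"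
    by (rule Suc_times_binomial_eq)
  ultimately have b: "real (Suc (2*n)) * C = B * real (Suc n)"
    unfolding B_def C_def of_nat_mult[symmetric] by simp
  have "A * (real n + 1) = (2 * B) * (real n + 1)"
    using a by (simp add: algebra_simps)
  then have "A = 2 * B"
    by simp
  moreover have "B = (2 * real n + 1) * C / (real n + 1)"
    using b by (simp add: field_simps)
  ultimately have A: "A = 2 * (2 * real n + 1) * C / (real n + 1)"
    by simp
  have cbp: "central_binom_prob (Suc n) = A / (4 * 4^n)" "central_binom_prob n = C / 4^n"
    by (simp_all add: central_binom_prob_def A_def C_def)
  have "(2 * (2 * real n + 1) * C / D) / (4 * F) = C / F * (2 * real n + 1) / (2 * D)"
    if "F \<noteq> 0" "D \<noteq> 0" for F D :: real
    using that by (simp add: field_simps)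
  from this[of "4^n" "real n + 1"] show ?thesis
    unfolding cbp A by (simp add: algebra_simps)
qed

lemma wallis_partial_product:
  "(\<Prod>k=1..n. (4 * real k^2) / (4 * real k^2 - 1)) = 1 / (central_binom_prob n^2 * (2 * real n + 1))"
proof (induction n)
  case (Suc n)
  define c where "c = central_binom_prob n"
  have c: "c \<noteq> 0"
    using central_binom_prob_pos[of n] by (simp add: c_def)
  have factor: "(4 * real (Suc n)^2) / (4 * real (Suc n)^2 - 1)
      = (2 * real n + 2)^2 / ((2 * real n + 1) * (2 * real n + 3))"
    by (simp add: power2_eq_square algebra_simps)
  have regroup: "1 / (c^2 * a) * (b^2 / (a * d)) = 1 / ((c * a / b)^2 * d)"
    if "a \<noteq> 0" "b \<noteq> 0" "d \<noteq> 0" for a b d :: real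
    using that c by (simp add: field_simps power2_eq_square)
  have "(\<Prod>k=1..Suc n. (4 * real k^2) / (4 * real k^2 - 1))
      = (\<Prod>k=1..n. (4 * real k^2) / (4 * real k^2 - 1)) * ((4 * real (Suc n)^2) / (4 * real (Suc n)^2 - 1))"
    by (simp add: prod.cl_ivl_Suc)
  also have "\<dots> = 1 / (c^2 * (2 * real n + 1)) * ((2 * real n + 2)^2 / ((2 * real n + 1) * (2 * real n + 3)))"
    unfolding Suc.IH factor c_def ..
  also have "\<dots> = 1 / ((c * (2 * real n + 1) / (2 * real n + 2))^2 * (2 * real n + 3))"
    by (rule regroup) simp_all
  also have "c * (2 * real n + 1) / (2 * real n + 2) = central_binom_prob (Suc n)"
    by (simp add: central_binom_prob_Suc c_def)
  finally show ?case
    by (simp add: add.commute)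
qed simp

lemma central_binom_prob_sq_tendsto: "(\<lambda>n. central_binom_prob n^2 * (2 * real n + 1)) \<longlonglongrightarrow> 2 / pi"
proof -
  have "(\<lambda>n. inverse (\<Prod>k=1..n. (4 * real k^2) / (4 * real k^2 - 1))) \<longlonglongrightarrow> inverse (pi / 2)"
    by (rule tendsto_inverse[OF wallis]) simp
  moreover have "inverse (\<Prod>k=1..n. (4 * real k^2) / (4 * real k^2 - 1)) = central_binom_prob n^2 * (2 * real n + 1)"
    for n
    unfolding wallis_partial_product by simp
  ultimately show ?thesis
    by simp
qed

lemma central_binom_prob_sq_tendsto_0: "(\<lambda>n. central_binom_prob n^2) \<longlonglongrightarrow> 0"
proof -
  have "(\<lambda>n. 1 / (2 * real n + 1)) \<longlonglongrightarrow> 0"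
    by real_asymp
  from tendsto_mult[OF central_binom_prob_sq_tendsto this]
  show ?thesis
    by simp
qed

lemma central_binom_prob_sq_Suc:
  "central_binom_prob (Suc n)^2 * (real (Suc n) + 1/4)
    = central_binom_prob n^2 * (real n + 1/4) + central_binom_prob n^2 / (4 * (2 * real n + 2)^2)"
proof -
  define x where "x = real n"
  define c where "c = central_binom_prob n"
  define b where "b = 2 * x + 2"
  have b: "b \<noteq> 0"
    by (simp add: b_def x_def)
  have "(c * (2 * x + 1) / b)^2 * (x + 1 + 1/4) * b^2 = c^2 * ((2 * x + 1)^2 * (x + 5/4))"
    using b by (simp add: power_divide power_mult_distrib)
  also have "(2 * x + 1)^2 * (x + 5/4) = (x + 1/4) * b^2 + 1/4"
    by (simp add: b_def power2_eq_square algebra_simps)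
  also have "c^2 * ((x + 1/4) * b^2 + 1/4) = (c^2 * (x + 1/4) + c^2 / (4 * b^2)) * b^2"
    using b by (simp add: algebra_simps power2_eq_square)
  finally have "(c * (2 * x + 1) / b)^2 * (x + 1 + 1/4) = c^2 * (x + 1/4) + c^2 / (4 * b^2)"
    using b by simp
  then show ?thesis
    by (simp add: central_binom_prob_Suc c_def x_def b_def)
qed

lemma central_binom_prob_sq_mult_tendsto: "(\<lambda>n. central_binom_prob n^2 * (real n + 1/4)) \<longlonglongrightarrow> 1 / pi"
proof -
  have "(\<lambda>n. central_binom_prob n^2 * (2 * real n + 1) / 2 - central_binom_prob n^2 / 4)
      \<longlonglongrightarrow> (2 / pi) / 2 - 0 / 4"
    by (intro tendsto_intros central_binom_prob_sq_tendsto central_binom_prob_sq_tendsto_0) simp_all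
  moreover have "central_binom_prob n^2 * (2 * real n + 1) / 2 - central_binom_prob n^2 / 4
      = central_binom_prob n^2 * (real n + 1/4)" for n
    by (simp add: algebra_simps)
  ultimately show ?thesis
    by simp
qed

lemma central_binom_prob_sq_le: "central_binom_prob n^2 * (real n + 1/4) \<le> 1 / pi"
proof (rule incseq_le[OF _ central_binom_prob_sq_mult_tendsto])
  show "incseq (\<lambda>n. central_binom_prob n^2 * (real n + 1/4))"
    by (rule incseq_SucI) (unfold central_binom_prob_sq_Suc, simp)
qed

lemma central_binom_prob_sq_upper_step:
  assumes n: "n \<ge> 1"
  shows "central_binom_prob (Suc n)^2 * (real (Suc n) + 1/4 + 1 / (8 * real (Suc n)))
    \<le> central_binom_prob n^2 * (real n + 1/4 + 1 / (8 * real n))"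
proof -
  define M where "M = real n"
  define N where "N = M + 1"
  define c where "c = central_binom_prob n"
  have M: "M \<ge> 1" and M0: "M \<noteq> 0" "N \<noteq> 0"
    using n by (simp_all add: M_def N_def)
  have cbp: "central_binom_prob (Suc n) = c * (2 * M + 1) / (2 * N)"
    by (simp add: central_binom_prob_Suc c_def M_def N_def algebra_simps)
  have "real (Suc n) + 1/4 + 1 / (8 * real (Suc n)) = (8 * N^2 + 2 * N + 1) / (8 * N)"
    using M0 by (simp add: M_def N_def field_simps power2_eq_square)
  moreover have "(c * (2 * M + 1) / (2 * N))^2 * ((8 * N^2 + 2 * N + 1) / (8 * N))
      = c^2 * (((2 * M + 1)^2 * (8 * N^2 + 2 * N + 1)) / (32 * N^3))"
    using M0 by (simp add: field_simps power2_eq_square power3_eq_cube)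
  ultimately have "central_binom_prob (Suc n)^2 * (real (Suc n) + 1/4 + 1 / (8 * real (Suc n)))
      = c^2 * (((2 * M + 1)^2 * (8 * N^2 + 2 * N + 1)) / (32 * N^3))"
    unfolding cbp by simp
  also have "\<dots> \<le> c^2 * ((8 * M^2 + 2 * M + 1) / (8 * M))"
  proof (intro mult_left_mono)
    have "(8 * M^2 + 2 * M + 1) * (32 * N^3) - ((2 * M + 1)^2 * (8 * N^2 + 2 * N + 1)) * (8 * M)
        = 8 * (6 * M^2 + 9 * M + 4)"
      by (simp add: N_def power2_eq_square power3_eq_cube algebra_simps)
    moreover have "0 \<le> 8 * (6 * M^2 + 9 * M + 4)"
      using M by simp
    ultimately have "((2 * M + 1)^2 * (8 * N^2 + 2 * N + 1)) * (8 * M) \<le> (8 * M^2 + 2 * M + 1) * (32 * N^3)"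
      by linarith
    moreover have "0 < 32 * N^3" "0 < 8 * M"
      using M by (simp_all add: N_def)
    moreover have "a / b \<le> c / d" if "b > 0" "d > 0" "a * d \<le> c * b" for a b c d :: real
      using that by (simp add: field_simps)
    ultimately show "((2 * M + 1)^2 * (8 * N^2 + 2 * N + 1)) / (32 * N^3) \<le> (8 * M^2 + 2 * M + 1) / (8 * M)"
      by blast
  qed simp
  also have "(8 * M^2 + 2 * M + 1) / (8 * M) = real n + 1/4 + 1 / (8 * real n)"
    using M0 by (simp add: M_def field_simps power2_eq_square)
  finally show ?thesis
    by (simp add: c_def)
qed

lemma central_binom_prob_sq_ge:
  assumes n: "n \<ge> 1"
  shows "1 / pi \<le> central_binom_prob n^2 * (real n + 1/4 + 1 / (8 * real n))"
proof -
  define high where "high m = central_binom_prob (Suc m)^2 * (real (Suc m) + 1/4 + 1 / (8 * real (Suc m)))"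
    for m
  have "(\<lambda>m. central_binom_prob (Suc m)^2 * (real (Suc m) + 1/4) + central_binom_prob (Suc m)^2 * (1 / (8 * real (Suc m))))
      \<longlonglongrightarrow> 1 / pi + 0 * 0"
    by (intro tendsto_intros LIMSEQ_Suc[OF central_binom_prob_sq_mult_tendsto]
        LIMSEQ_Suc[OF central_binom_prob_sq_tendsto_0]) real_asymp
  moreover have "high = (\<lambda>m. central_binom_prob (Suc m)^2 * (real (Suc m) + 1/4)
      + central_binom_prob (Suc m)^2 * (1 / (8 * real (Suc m))))"
    by (simp add: high_def fun_eq_iff algebra_simps)
  ultimately have "high \<longlonglongrightarrow> 1 / pi"
    by simp
  moreover have "decseq high"
    by (rule decseq_SucI) (unfold high_def, rule central_binom_prob_sq_upper_step, simp)
  ultimately have "1 / pi \<le> high (n - 1)"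
    by (intro decseq_ge)
  then show ?thesis
    using n by (simp add: high_def)
qed

lemma central_binom_prob_sq_approx:
  assumes n: "n \<ge> 1"
  shows "\<bar>central_binom_prob n^2 - 1 / (pi * (real n + 1/4))\<bar> \<le> 1 / real n ^ 3"
proof -
  define x where "x = real n"
  define c where "c = central_binom_prob n"
  have x: "x \<ge> 1"
    using n by (simp add: x_def)
  have lo: "c^2 * (x + 1/4) \<le> 1 / pi" and hi: "1 / pi \<le> c^2 * (x + 1/4 + 1 / (8 * x))"
    using central_binom_prob_sq_le[of n] central_binom_prob_sq_ge[OF n] by (simp_all add: c_def x_def)
  have "x \<le> 3 * (x + 1/4)"
    using x by simp
  also have "\<dots> \<le> pi * (x + 1/4)"
    using mult_right_mono[of 3 pi "x + 1/4"] pi_gt3 x by simp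
  finally have "x \<le> pi * (x + 1/4)" .
  have "c^2 \<le> (1 / pi) / (x + 1/4)"
    using lo x by (simp add: pos_le_divide_eq mult_ac)
  also have "\<dots> \<le> 1 / x"
    using \<open>x \<le> pi * (x + 1/4)\<close> x by (simp add: divide_left_mono)
  finally have "c^2 \<le> 1 / x" .
  have regroup: "c^2 - 1 / (pi * y) = (c^2 * y - 1 / pi) / y" if "y \<noteq> 0" for y
    using that by (simp add: field_simps)
  have "\<bar>c^2 * (x + 1/4) - 1 / pi\<bar> \<le> c^2 / (8 * x)"
    using lo hi by (simp add: algebra_simps)
  also have "\<dots> \<le> (1 / x) / (8 * x)"
    using \<open>c^2 \<le> 1 / x\<close> x by (intro divide_right_mono) simp_all
  also have "\<dots> = 1 / (8 * x^2)"
    by (simp add: power2_eq_square)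
  finally have "\<bar>c^2 * (x + 1/4) - 1 / pi\<bar> / (x + 1/4) \<le> 1 / (8 * x^2) / (x + 1/4)"
    using x by (intro divide_right_mono) simp_all
  also have "\<dots> \<le> 1 / (8 * x^2) / x"
    using x by (intro divide_left_mono) simp_all
  also have "\<dots> = 1 / (8 * x^3)"
    by (simp add: power2_eq_square power3_eq_cube)
  also have "\<dots> \<le> 1 / x^3"
    using x by (intro divide_left_mono) simp_all
  also have "\<bar>c^2 * (x + 1/4) - 1 / pi\<bar> / (x + 1/4) = \<bar>c^2 - 1 / (pi * (x + 1/4))\<bar>"
    using x by (simp add: regroup abs_divide)
  finally show ?thesis
    by (simp add: c_def x_def)
qed

lemma central_binom_prob_approx:
  assumes n: "n \<ge> 1"
  shows "\<bar>central_binom_prob n - 1 / sqrt (pi * (real n + 1/4))\<bar> \<le> 3 / (real n ^ 2 * sqrt (real n))"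
proof -
  define x where "x = real n"
  define c where "c = central_binom_prob n"
  define Z where "Z = 1 / sqrt (pi * (x + 1/4))"
  have x: "x \<ge> 1"
    using n by (simp add: x_def)
  have c: "c > 0" and Z: "Z > 0"
    using x central_binom_prob_pos[of n] by (simp_all add: c_def Z_def)
  have "Z^2 = 1 / (pi * (x + 1/4))"
    using x by (simp add: Z_def power_divide)
  then have sq: "\<bar>c^2 - Z^2\<bar> \<le> 1 / x^3"
    using central_binom_prob_sq_approx[OF n] by (simp add: c_def x_def)
  have "c^2 - Z^2 = (c - Z) * (c + Z)"
    by (simp add: power2_eq_square algebra_simps)
  then have "\<bar>c - Z\<bar> = \<bar>c^2 - Z^2\<bar> / (c + Z)"
    using c Z by (simp add: abs_mult)
  also have "\<dots> \<le> \<bar>c^2 - Z^2\<bar> / Z"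
    using c Z by (intro divide_left_mono) simp_all
  also have "\<dots> \<le> (1 / x^3) / Z"
    using sq Z by (intro divide_right_mono) simp_all
  also have "\<dots> = sqrt (pi * (x + 1/4)) / x^3"
    by (simp add: Z_def)
  also have "\<dots> \<le> sqrt (9 * x) / x^3"
  proof (intro divide_right_mono real_sqrt_le_mono)
    have "pi * (x + 1/4) \<le> 4 * (x + 1/4)"
      using mult_right_mono[of pi 4 "x + 1/4"] pi_less_4 x by simp
    also have "\<dots> \<le> 9 * x"
      using x by simp
    finally show "pi * (x + 1/4) \<le> 9 * x" .
  qed (use x in simp)
  also have "sqrt (9 * x) / x^3 = 3 / (x^2 * sqrt x)"
    using x by (simp add: real_sqrt_mult power3_eq_cube power2_eq_square field_simps)
  finally show ?thesis
    by (simp add: c_def x_def Z_def)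
qed

lemma central_binom_prob_asymp:
  "(\<lambda>l. central_binom_prob l - 1 / sqrt (pi * (real l + 1/4))) \<in> O(\<lambda>l. real l powr (-5/2))"
proof -
  have "(\<lambda>l. central_binom_prob l - 1 / sqrt (pi * (real l + 1/4))) \<in> O(\<lambda>l. 1 / (real l ^ 2 * sqrt (real l)))"
  proof (rule bigoI[where c = 3])
    show "\<forall>\<^sub>F l in sequentially. norm (central_binom_prob l - 1 / sqrt (pi * (real l + 1/4)))
        \<le> 3 * norm (1 / (real l ^ 2 * sqrt (real l)))"
      using eventually_ge_at_top[of 1] by eventually_elim (simp add: central_binom_prob_approx)
  qed
  also have "(\<lambda>l. 1 / (real l ^ 2 * sqrt (real l))) \<in> O(\<lambda>l. real l powr (-5/2))"
    by real_asymp
  finally show ?thesis .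
qed

section \<open>Asymptotic expansions\<close>

lemma ratio_sum_bigo_1: "ratio_sum \<in> O(\<lambda>_. 1)"
proof (rule bigoI[where c = 2])
  show "\<forall>\<^sub>F l in sequentially. norm (ratio_sum l) \<le> 2 * norm (1::real)"
    using ratio_sum_nonneg ratio_sum_less_2 by (intro always_eventually) (simp add: less_imp_le)
qed

lemma half_plus_central_binom_prob_asymp:
  fixes m K :: "nat \<Rightarrow> real" and \<beta> a b :: real
  assumes closed: "\<forall>\<^sub>F l in sequentially. m l = 1/2 + central_binom_prob l * (K l - \<beta> * ratio_sum l)"
    and K: "K \<in> O(\<lambda>_. 1)"
    and expansion: "(\<lambda>l. (K l - \<beta> * ratio_sum_approx l) / sqrt (real l + 1/4)
        - (a / sqrt (real l) + b / real l powr (3/2))) \<in> O(\<lambda>l. real l powr (-5/2))"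
  shows "(\<lambda>l. m l - (1/2 + a / sqrt (pi * real l) + b / (sqrt pi * real l powr (3/2))))
    \<in> O(\<lambda>l. real l powr (-5/2))"
proof -
  define Z where "Z l = 1 / sqrt (pi * (real l + 1/4))" for l
  define E where "E l = (K l - \<beta> * ratio_sum_approx l) / sqrt (real l + 1/4)
    - (a / sqrt (real l) + b / real l powr (3/2))" for l
  have "(\<lambda>l. K l - \<beta> * ratio_sum l) \<in> O(\<lambda>_. 1)"
    using K ratio_sum_bigo_1 by (intro sum_in_bigo) simp_all
  from landau_o.big.mult[OF central_binom_prob_asymp this]
  have first: "(\<lambda>l. (central_binom_prob l - Z l) * (K l - \<beta> * ratio_sum l)) \<in> O(\<lambda>l. real l powr (-5/2))"
    by (simp add: Z_def)
  have "Z \<in> O(\<lambda>l. real l powr (-1/2))"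
    unfolding Z_def by real_asymp
  from landau_o.big.mult[OF this ratio_sum_asymp]
  have "(\<lambda>l. Z l * (ratio_sum l - ratio_sum_approx l)) \<in> O(\<lambda>l. real l powr (-1/2) * (1 / real l ^ 2))" .
  also have "(\<lambda>l. real l powr (-1/2) * (1 / real l ^ 2)) \<in> O(\<lambda>l. real l powr (-5/2))"
    by real_asymp
  finally have second: "(\<lambda>l. \<beta> * (Z l * (ratio_sum l - ratio_sum_approx l))) \<in> O(\<lambda>l. real l powr (-5/2))"
    by simp
  have third: "(\<lambda>l. E l / sqrt pi) \<in> O(\<lambda>l. real l powr (-5/2))"
    using expansion by (simp add: E_def)
  have "(\<lambda>l. (central_binom_prob l - Z l) * (K l - \<beta> * ratio_sum l)
      - \<beta> * (Z l * (ratio_sum l - ratio_sum_approx l)) + E l / sqrt pi) \<in> O(\<lambda>l. real l powr (-5/2))"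
    using first second third by (intro sum_in_bigo)
  moreover have ev: "\<forall>\<^sub>F l in sequentially.
      (central_binom_prob l - Z l) * (K l - \<beta> * ratio_sum l) - \<beta> * (Z l * (ratio_sum l - ratio_sum_approx l))
        + E l / sqrt pi
      = m l - (1/2 + a / sqrt (pi * real l) + b / (sqrt pi * real l powr (3/2)))"
    using closed
  proof eventually_elim
    case (elim l)
    have "Z l = 1 / sqrt (real l + 1/4) / sqrt pi"
      by (simp add: Z_def real_sqrt_mult)
    then show ?case
      by (simp add: elim E_def real_sqrt_mult field_simps)
  qed
  ultimately show ?thesis
    using landau_o.big.in_cong[OF ev] by simp
qed

lemma m_lam_asymp:
  "(\<lambda>l. m_lam l - (1/2 + 1 / (2 * sqrt (pi * real l)) + 15 / (16 * sqrt pi * real l powr (3/2))))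
    \<in> O(\<lambda>l. real l powr (-5/2))"
proof -
  have "(\<lambda>l. m_lam l - (1/2 + (1/2) / sqrt (pi * real l) + (15/16) / (sqrt pi * real l powr (3/2))))
      \<in> O(\<lambda>l. real l powr (-5/2))"
  proof (rule half_plus_central_binom_prob_asymp[where K = "\<lambda>l. 1/2 + real l / (2 * (real l + 1))"])
    show "\<forall>\<^sub>F l in sequentially. m_lam l
        = 1/2 + central_binom_prob l * (1/2 + real l / (2 * (real l + 1)) - 1/4 * ratio_sum l)"
      using eventually_ge_at_top[of 1] by eventually_elim (simp add: m_lam_closed_form)
    show "(\<lambda>l. 1/2 + real l / (2 * (real l + 1))) \<in> O(\<lambda>_. 1)"
      by real_asymp
    show "(\<lambda>l. (1/2 + real l / (2 * (real l + 1)) - 1/4 * ratio_sum_approx l) / sqrt (real l + 1/4)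
        - ((1/2) / sqrt (real l) + (15/16) / real l powr (3/2))) \<in> O(\<lambda>l. real l powr (-5/2))"
      unfolding ratio_sum_approx_def by real_asymp
  qed
  then show ?thesis
    by (simp add: mult.assoc)
qed

lemma m_tilde_asymp:
  "(\<lambda>l. m_tilde l - (1/2 - 1 / (2 * sqrt (pi * real l)) + 49 / (16 * sqrt pi * real l powr (3/2))))
    \<in> O(\<lambda>l. real l powr (-5/2))"
proof -
  have "(\<lambda>l. m_tilde l - (1/2 + (-1/2) / sqrt (pi * real l) + (49/16) / (sqrt pi * real l powr (3/2))))
      \<in> O(\<lambda>l. real l powr (-5/2))"
  proof (rule half_plus_central_binom_prob_asymp[where K = "\<lambda>_. 1/2"])
    show "\<forall>\<^sub>F l in sequentially. m_tilde l = 1/2 + central_binom_prob l * (1/2 - 1/2 * ratio_sum l)"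
      by (simp add: m_tilde_closed_form)
    show "(\<lambda>l. (1/2 - 1/2 * ratio_sum_approx l) / sqrt (real l + 1/4)
        - ((-1/2) / sqrt (real l) + (49/16) / real l powr (3/2))) \<in> O(\<lambda>l. real l powr (-5/2))"
      unfolding ratio_sum_approx_def by real_asymp
  qed simp
  then show ?thesis
    by (simp add: mult.assoc)
qed

theorem proposition4p1:
  shows "(\<forall>l::nat. l \<ge> 1 \<longrightarrow> m_tilde l < 1/2 \<and> 1/2 < m_lam l)
    \<and> (\<lambda>l. m_lam l - (1/2 + 1 / (2 * sqrt (pi * real l))
                         + 15 / (16 * sqrt pi * real l powr (3/2))))
        \<in> O(\<lambda>l. real l powr (-5/2))
    \<and> (\<lambda>l. m_tilde l - (1/2 - 1 / (2 * sqrt (pi * real l))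
                         + 49 / (16 * sqrt pi * real l powr (3/2))))
        \<in> O(\<lambda>l. real l powr (-5/2))"
  using m_tilde_less_half half_less_m_lam m_lam_asymp m_tilde_asymp by blast

end
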